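(* Let $G=(V,E,H)$ be a HEDG and $\mathbb{P}_V$ a probability distribution on $\mathcal{X}_V=\prod_{v\in V}\mathcal{X}_v$ (standard Borel spaces) such that $(G,\mathbb{P}_V)$ satisfies the loop-wisely solvable structural equations property (lsSEP). Then for every subset $W\subseteq V$, the pair $(G^{\mathrm{marg}\setminus W},\mathbb{P}_{V\setminus W})$ also satisfies lsSEP, where $\mathbb{P}_{V\setminus W}$ is the marginal of $\mathbb{P}_V$ on $\mathcal{X}_{V\setminus W}$.
   Context: HEDG $G=(V,E,H)$: $V$ finite, $E\subseteq V\times V$ (self-loops allowed), $H$ a simplicial complex on $V$ (contains singletons, closed under subsets), $\tilde H$ its inclusion-maximal elements. $\mathrm{Pa}^G(S)=\{u:(u,v)\in E\text{ for some }v\in S\}$. A strongly connected induced sub-HEDG (loop) is a nonempty $S\subseteq V$ such that any two nodes of $S$ are joined by directed paths in both directions using only nodes of $S$ (singletons are loops). Marginalization $G^{\mathrm{marg}\setminus W}=(V\setminus W,E',H')$: $v_1\to v_2\in E'$ iff $G$ has a directed path $v_1\to u_1\to\cdots\to u_r\to v_2$ ($r\ge0$, all $u_i\in W$); $F'\subseteq V\setminus W$ is in $H'$ iff there is $F\in H$, $F\subseteq F'\cup W$, such that each $v\in F'$ lies in $F\setminus W$ or is reached by a directed path $u_1\to\cdots\to u_r\to v$ ($r\ge1$, $u_i\in W$, $u_1\in F$). lsSEP for $(G,\mathbb{P}_V)$: there exist a probability space $(\Omega,\mathfrak A,\mathbb P)$, jointly independent random variables $E_F:\Omega\to\mathcal{E}_F$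 ($F\in\tilde H$) in standard Borel spaces, measurable $f_v:\mathcal{X}_{\mathrm{Pa}^G(v)}\times\mathcal{E}_v\to\mathcal{X}_v$ with $\mathcal{E}_v=\prod_{F\in\tilde H,v\in F}\mathcal{E}_F$, random variables $X_v:\Omega\to\mathcal{X}_v$ with $X_v=f_v(X_{\mathrm{Pa}^G(v)},E_v)$ a.s. ($E_v=(E_F)_{F\ni v}$) and joint law of $(X_v)_{v\in V}$ equal to $\mathbb{P}_V$, and for every loop $S$ and every $v\in S$ a measurable $\hat g_{S,v}:\mathcal{X}_{\mathrm{Pa}^G(S)\setminus S}\times\mathcal{E}_S\to\mathcal{X}_v$ with $X_v=\hat g_{S,v}(X_{\mathrm{Pa}^G(S)\setminus S},E_S)$ a.s., where $\mathcal{E}_S=\prod_{F\in\tilde H,F\cap S\ne\emptyset}\mathcal{E}_F$ and $E_S=(E_F)_{F\cap S\neq\emptyset}$. *)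

theory Defs
  imports "HOL-Probability.Probability"
begin

definition standard_borel :: "'a measure \<Rightarrow> bool" where
  "standard_borel M \<longleftrightarrow>
     (\<exists>T :: 'a topology. completely_metrizable_space T \<and> separable_space T \<and>
        topspace T = space M \<and> sets M = sigma_sets (topspace T) {U. openin T U})"

definition HEDG :: "'v set \<Rightarrow> ('v \<times> 'v) set \<Rightarrow> 'v set set \<Rightarrow> bool" where
  "HEDG V E H \<longleftrightarrow> finite V \<and> E \<subseteq> V \<times> V \<and> H \<subseteq> Pow V \<and>
     (\<forall>v\<in>V. {v} \<in> H) \<and> (\<forall>F\<in>H. \<forall>F'. F' \<subseteq> F \<longrightarrow> F' \<in> H)"

definition maxH :: "'v set set \<Rightarrow> 'v set set" where
  "maxH H = {F \<in> H. \<forall>F'\<in>H. F \<subseteq> F' \<longrightarrow> F' = F}"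

definition Pa :: "('v \<times> 'v) set \<Rightarrow> 'v set \<Rightarrow> 'v set" where
  "Pa E S = {u. \<exists>v\<in>S. (u, v) \<in> E}"

definition is_loop :: "'v set \<Rightarrow> ('v \<times> 'v) set \<Rightarrow> 'v set \<Rightarrow> bool" where
  "is_loop V E S \<longleftrightarrow> S \<noteq> {} \<and> S \<subseteq> V \<and>
     (\<forall>u\<in>S. \<forall>w\<in>S. (u, w) \<in> (E \<inter> (S \<times> S))\<^sup>*)"

text \<open>(a,b) \<in> via E W  iff there is a directed path a \<rightarrow> u1 \<rightarrow> ... \<rightarrow> ur \<rightarrow> b
with r \<ge> 0 and all intermediate nodes u_i in W.\<close>
definition via :: "('v \<times> 'v) set \<Rightarrow> 'v set \<Rightarrow> ('v \<times> 'v) set" where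
  "via E W = (E \<inter> (UNIV \<times> W))\<^sup>* O E"

definition margE :: "'v set \<Rightarrow> ('v \<times> 'v) set \<Rightarrow> 'v set \<Rightarrow> ('v \<times> 'v) set" where
  "margE V E W = {(a, b). a \<in> V - W \<and> b \<in> V - W \<and> (a, b) \<in> via E W}"

definition margH :: "'v set \<Rightarrow> ('v \<times> 'v) set \<Rightarrow> 'v set set \<Rightarrow> 'v set \<Rightarrow> 'v set set" where
  "margH V E H W = {F'. F' \<subseteq> V - W \<and>
     (\<exists>F\<in>H. F \<subseteq> F' \<union> W \<and>
        (\<forall>v\<in>F'. v \<in> F - W \<or> (\<exists>u1\<in>F. u1 \<in> W \<and> (u1, v) \<in> via E W)))}"

text \<open>The probability space lives on type 'w and the
noise spaces on type 'n (these are existentially quantified in the paper; in HOL the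
carrier types are parameters).\<close>
definition lsSEP :: "'v set \<Rightarrow> ('v \<times> 'v) set \<Rightarrow> 'v set set \<Rightarrow> ('v \<Rightarrow> 'x measure) \<Rightarrow>
    ('v \<Rightarrow> 'x) measure \<Rightarrow> 'w itself \<Rightarrow> 'n itself \<Rightarrow> bool" where
  "lsSEP V E H M P (_ :: 'w itself) (_ :: 'n itself) \<longleftrightarrow>
    (\<exists>(\<Omega> :: 'w measure) (N :: 'v set \<Rightarrow> 'n measure) (Ev :: 'v set \<Rightarrow> 'w \<Rightarrow> 'n)
       (f :: 'v \<Rightarrow> ('v \<Rightarrow> 'x) \<times> ('v set \<Rightarrow> 'n) \<Rightarrow> 'x) (X :: 'v \<Rightarrow> 'w \<Rightarrow> 'x)
       (g :: 'v set \<Rightarrow> 'v \<Rightarrow> ('v \<Rightarrow> 'x) \<times> ('v set \<Rightarrow> 'n) \<Rightarrow> 'x).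
      prob_space \<Omega> \<and>
      (\<forall>F\<in>maxH H. standard_borel (N F) \<and> Ev F \<in> measurable \<Omega> (N F)) \<and>
      prob_space.indep_vars \<Omega> N Ev (maxH H) \<and>
      (\<forall>v\<in>V. f v \<in> measurable
          (PiM (Pa E {v}) M \<Otimes>\<^sub>M PiM {F \<in> maxH H. v \<in> F} N) (M v)) \<and>
      (\<forall>v\<in>V. X v \<in> measurable \<Omega> (M v)) \<and>
      (\<forall>v\<in>V. AE \<omega> in \<Omega>. X v \<omega> = f v (restrict (\<lambda>u. X u \<omega>) (Pa E {v}),
                                         restrict (\<lambda>F. Ev F \<omega>) {F \<in> maxH H. v \<in> F})) \<and>
      distr \<Omega> (PiM V M) (\<lambda>\<omega>. restrict (\<lambda>v. X v \<omega>) V) = P \<and>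
      (\<forall>S. is_loop V E S \<longrightarrow> (\<forall>v\<in>S.
          g S v \<in> measurable
            (PiM (Pa E S - S) M \<Otimes>\<^sub>M PiM {F \<in> maxH H. F \<inter> S \<noteq> {}} N) (M v) \<and>
          (AE \<omega> in \<Omega>. X v \<omega> = g S v (restrict (\<lambda>u. X u \<omega>) (Pa E S - S),
                                        restrict (\<lambda>F. Ev F \<omega>) {F \<in> maxH H. F \<inter> S \<noteq> {}})))))"

end

theory Submission
  imports Defs
begin

text \<open>Marginalizing W, every latent node u is almost surely a measurable function of its
  observed ancestors reached through W and of the noise of the hyperedges meeting the ancestors
  of u inside W: the strong component of u in the subgraph induced on W is a loop, and the latent
  parents of that component have fewer ancestors in W. A loop S of the marginal graph, enlarged by
  the latent nodes lying on W-paths between nodes of S, is a loop of the original graph;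
  substituting its latent parents expresses each node of S through the marginal parents of S and
  the noise of the hyperedges whose marginal image meets S. Assigning each maximal hyperedge to a
  maximal marginal hyperedge containing its image and grouping the noises accordingly keeps them
  independent, and the structural equations are the solutions of the singleton loops.\<close>

section \<open>Finite products of standard Borel spaces\<close>

lemma second_countable_if_separable_metrizable:
  assumes "metrizable_space T" "separable_space T"
  shows "second_countable T"
proof -
  obtain M d where md: "Metric_space M d" "T = Metric_space.mtopology M d"
    using assms(1) unfolding metrizable_space_def by blast
  interpret Metric_space M d by fact
  obtain C where C: "countable C" "C \<subseteq> M" "mtopology closure_of C = M"
    using assms(2) md unfolding separable_space_def by auto
  define \<B> where "\<B> = (\<lambda>(c, n::nat). mball c (1 / Suc n)) ` (C \<times> UNIV)"
  have "\<exists>B\<in>\<B>. x \<in> B \<and> B \<subseteq> U" if "openin T U" "x \<in> U" for U x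
  proof -
    from that obtain r where r: "r > 0" "mball x r \<subseteq> U" and x: "x \<in> M"
      unfolding md openin_mtopology by blast
    obtain n :: nat where n: "1 / Suc n < r / 2"
      using reals_Archimedean[of "r / 2"] r(1) by (auto simp: field_simps)
    have "x \<in> mtopology closure_of C" using C(3) x by simp
    then have "\<forall>r>0. \<exists>y\<in>C. y \<in> mball x r" unfolding metric_closure_of by blast
    then obtain y where y: "y \<in> C" "y \<in> mball x (1 / Suc n)"
      by (meson of_nat_0_less_iff zero_less_Suc zero_less_divide_1_iff)
    have "mball y (1 / Suc n) \<subseteq> mball x r"
    proof
      fix z assume z: "z \<in> mball y (1 / Suc n)"
      have "d x z \<le> d x y + d y z" using x y z by (auto intro: triangle)
      also have "\<dots> < r" using y z n by auto
      finally show "z \<in> mball x r" using x z by auto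
    qed
    moreover have "x \<in> mball y (1 / Suc n)" using y x by (auto simp: commute)
    ultimately show ?thesis using r y(1) unfolding \<B>_def by blast
  qed
  moreover have "countable \<B>" "\<forall>B\<in>\<B>. openin T B" unfolding \<B>_def md using C(1) by auto
  ultimately show ?thesis unfolding second_countable_def by blast
qed

lemma separable_space_product_topology_finite:
  assumes "finite K" "\<And>i. i \<in> K \<Longrightarrow> separable_space (T i)"
  shows "separable_space (product_topology T K)"
proof -
  obtain C where C: "\<And>i. i \<in> K \<Longrightarrow>
      countable (C i) \<and> C i \<subseteq> topspace (T i) \<and> T i closure_of C i = topspace (T i)"
    using assms(2) unfolding separable_space_def by metis
  have "countable (PiE K C)" using assms(1) C by (auto intro: countable_PiE)
  moreover have "PiE K C \<subseteq> topspace (product_topology T K)" using C by (auto intro: PiE_mono)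
  moreover have "product_topology T K closure_of PiE K C = topspace (product_topology T K)"
    unfolding closure_of_product_topology topspace_product_topology using C
    by (auto intro!: PiE_cong)
  ultimately show ?thesis unfolding separable_space_def by blast
qed

lemma sets_PiM_subset_sigma_product_topology:
  assumes T: "\<And>i. i \<in> K \<Longrightarrow> topspace (T i) = space (N i) \<and>
      sets (N i) = sigma_sets (topspace (T i)) {U. openin (T i) U}"
  shows "sets (PiM K N) \<subseteq>
    sigma_sets (topspace (product_topology T K)) {U. openin (product_topology T K) U}"
proof -
  let ?P = "product_topology T K"
  have top: "topspace ?P = PiE K (\<lambda>i. space (N i))"
    using T by (auto simp: topspace_product_topology intro!: PiE_cong)
  have "{f \<in> topspace ?P. f i \<in> A} \<in> sigma_sets (topspace ?P) {U. openin ?P U}"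
    if i: "i \<in> K" and A: "A \<in> sets (N i)" for i A
  proof -
    have proj: "continuous_map ?P (T i) (\<lambda>f. f i)"
      using i by (rule continuous_map_product_projection)
    have "(\<lambda>f. f i) -` A \<inter> topspace ?P \<in>
        {(\<lambda>f. f i) -` A \<inter> topspace ?P |A. A \<in> sigma_sets (topspace (T i)) {U. openin (T i) U}}"
      using A T[OF i] by auto
    also have "\<dots> = sigma_sets (topspace ?P) {(\<lambda>f. f i) -` U \<inter> topspace ?P |U. U \<in> {U. openin (T i) U}}"
      using proj by (intro sigma_sets_vimage_commute) (auto simp: continuous_map_def)
    also have "\<dots> \<subseteq> sigma_sets (topspace ?P) {U. openin ?P U}"
      using openin_continuous_map_preimage[OF proj]
      by (intro sigma_sets_mono') (auto simp: vimage_def Int_def conj_commute)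
    finally show ?thesis by (simp add: vimage_def Int_def conj_commute)
  qed
  then show ?thesis
    unfolding sets_PiM_single top[symmetric] by (intro sigma_sets_mono) auto
qed

lemma openin_product_topology_in_sets_PiM:
  assumes "finite K"
    and sc: "\<And>i. i \<in> K \<Longrightarrow> second_countable (T i)"
    and opens: "\<And>i U. i \<in> K \<Longrightarrow> openin (T i) U \<Longrightarrow> U \<in> sets (N i)"
    and U: "openin (product_topology T K) U"
  shows "U \<in> sets (PiM K N)"
proof -
  obtain B where B: "\<And>i. i \<in> K \<Longrightarrow> countable (B i) \<and> (\<forall>V\<in>B i. openin (T i) V) \<and>
      (\<forall>U x. openin (T i) U \<and> x \<in> U \<longrightarrow> (\<exists>V\<in>B i. x \<in> V \<and> V \<subseteq> U))"
    using sc unfolding second_countable_def by metis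
  define boxes where "boxes = PiE K ` {c \<in> PiE K B. PiE K c \<subseteq> U}"
  have "countable boxes"
    unfolding boxes_def using assms(1) B
    by (intro countable_image countable_subset[OF _ countable_PiE[of K B]]) auto
  moreover have "boxes \<subseteq> sets (PiM K N)"
  proof
    fix S assume "S \<in> boxes"
    then obtain c where c: "c \<in> PiE K B" "S = PiE K c" unfolding boxes_def by auto
    have "c i \<in> sets (N i)" if "i \<in> K" for i
      using c(1) B[OF that] opens[OF that] that by (auto simp: PiE_iff)
    then show "S \<in> sets (PiM K N)" using c(2) assms(1) by (auto intro: sets_PiM_I_finite)
  qed
  moreover have "U \<subseteq> \<Union>boxes"
  proof
    fix x assume "x \<in> U"
    then obtain Opn where Opn: "\<forall>i\<in>K. openin (T i) (Opn i)" "x \<in> PiE K Opn" "PiE K Opn \<subseteq> U"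
      using U unfolding openin_product_topology_alt by blast
    have "\<forall>i\<in>K. \<exists>b\<in>B i. x i \<in> b \<and> b \<subseteq> Opn i" using Opn B by (auto simp: PiE_iff)
    then obtain c where c: "\<And>i. i \<in> K \<Longrightarrow> c i \<in> B i \<and> x i \<in> c i \<and> c i \<subseteq> Opn i"
      by metis
    have "restrict c K \<in> {c \<in> PiE K B. PiE K c \<subseteq> U}"
      using c Opn(3) PiE_mono[of K c Opn] PiE_cong[of K "restrict c K" c] by auto
    moreover have "x \<in> PiE K (restrict c K)" using c Opn(2) by (auto simp: PiE_iff)
    ultimately show "x \<in> \<Union>boxes" unfolding boxes_def by blast
  qed
  then have "\<Union>boxes = U" unfolding boxes_def by auto
  ultimately show ?thesis using sets.countable_Union by metis
qed

lemma standard_borel_PiM: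
  assumes "finite K" "\<And>i. i \<in> K \<Longrightarrow> standard_borel (N i)"
  shows "standard_borel (PiM K N)"
proof -
  obtain T where T: "\<And>i. i \<in> K \<Longrightarrow> completely_metrizable_space (T i) \<and> separable_space (T i) \<and>
      topspace (T i) = space (N i) \<and> sets (N i) = sigma_sets (topspace (T i)) {U. openin (T i) U}"
    using assms(2) unfolding standard_borel_def by metis
  let ?P = "product_topology T K"
  have top: "topspace ?P = space (PiM K N)"
    using T by (auto simp: space_PiM topspace_product_topology intro!: PiE_cong)
  have "completely_metrizable_space ?P"
    using assms(1) T by (auto simp: completely_metrizable_space_product_topology intro: countable_finite)
  moreover have "separable_space ?P"
    using assms(1) T by (intro separable_space_product_topology_finite) auto
  moreover have "sets (PiM K N) = sigma_sets (topspace ?P) {U. openin ?P U}"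
  proof
    show "sets (PiM K N) \<subseteq> sigma_sets (topspace ?P) {U. openin ?P U}"
      using T by (intro sets_PiM_subset_sigma_product_topology) auto
    have "openin ?P U \<Longrightarrow> U \<in> sets (PiM K N)" for U
      using assms(1) T
      by (intro openin_product_topology_in_sets_PiM)
         (auto intro: second_countable_if_separable_metrizable completely_metrizable_imp_metrizable_space
               sigma_sets.Basic)
    then show "sigma_sets (topspace ?P) {U. openin ?P U} \<subseteq> sets (PiM K N)"
      unfolding top by (intro sets.sigma_sets_subset) auto
  qed
  ultimately show ?thesis unfolding standard_borel_def using top by blast
qed

section \<open>Paths through latent nodes\<close>

lemma edge_in_via: "(a, b) \<in> E \<Longrightarrow> (a, b) \<in> via E W"
  unfolding via_def by auto

lemma via_append_edge: "(a, w) \<in> via E W \<Longrightarrow> w \<in> W \<Longrightarrow> (w, b) \<in> E \<Longrightarrow> (a, b) \<in> via E W"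
  unfolding via_def by (auto intro: rtrancl_into_rtrancl)

lemma via_prepend_edge: "(a, w) \<in> E \<Longrightarrow> w \<in> W \<Longrightarrow> (w, b) \<in> via E W \<Longrightarrow> (a, b) \<in> via E W"
  unfolding via_def by (auto intro: converse_rtrancl_into_rtrancl)

lemma via_append_path:
  "(c, u) \<in> (E \<inter> W \<times> W)\<^sup>* \<Longrightarrow> (a, c) \<in> via E W \<Longrightarrow> (a, u) \<in> via E W"
  by (induction rule: rtrancl_induct) (auto intro: via_append_edge)

lemma via_prepend_path:
  "(w, a) \<in> (E \<inter> W \<times> W)\<^sup>* \<Longrightarrow> (a, b) \<in> via E W \<Longrightarrow> (w, b) \<in> via E W"
  by (induction rule: converse_rtrancl_induct) (auto intro: via_prepend_edge)

lemma via_trans: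
  assumes "(a, w) \<in> via E W" "w \<in> W" "(w, b) \<in> via E W"
  shows "(a, b) \<in> via E W"
proof -
  obtain y where "(a, y) \<in> (E \<inter> UNIV \<times> W)\<^sup>*" "(y, w) \<in> E"
    using assms(1) unfolding via_def by auto
  with assms(2) have "(a, w) \<in> (E \<inter> UNIV \<times> W)\<^sup>*" by (auto intro: rtrancl_into_rtrancl)
  with assms(3) show ?thesis unfolding via_def by (auto intro: rtrancl_trans)
qed

lemma rtrancl_restrict_intermediate:
  assumes "(a, b) \<in> R\<^sup>*"
  shows "(a, b) \<in> (Restr R {x. (a, x) \<in> R\<^sup>* \<and> (x, b) \<in> R\<^sup>*})\<^sup>*"
  using assms
proof (induction rule: converse_rtrancl_induct)
  case base
  then show ?case by simp
next
  case (step a y)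
  let ?Z = "\<lambda>a. {x. (a, x) \<in> R\<^sup>* \<and> (x, b) \<in> R\<^sup>*}"
  have "?Z y \<subseteq> ?Z a" using step.hyps(1) by (auto intro: converse_rtrancl_into_rtrancl)
  then have "(y, b) \<in> (Restr R (?Z a))\<^sup>*"
    using step.IH rtrancl_mono[of "Restr R (?Z y)" "Restr R (?Z a)"] by blast
  moreover have "(a, y) \<in> Restr R (?Z a)"
    using step.hyps by (auto intro: converse_rtrancl_into_rtrancl)
  ultimately show ?case by (rule converse_rtrancl_into_rtrancl[rotated])
qed

lemma via_path_through_intermediates:
  assumes "(x, y) \<in> via E W"
  shows "(x, y) \<in> (Restr E ({x, y} \<union> {n \<in> W. (x, n) \<in> via E W \<and> (n, y) \<in> via E W}))\<^sup>*"
    (is "_ \<in> (Restr E ?Z)\<^sup>*")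
proof -
  let ?R = "E \<inter> UNIV \<times> W"
  obtain z where z: "(x, z) \<in> ?R\<^sup>*" "(z, y) \<in> E" using assms unfolding via_def by blast
  let ?Y = "{n. (x, n) \<in> ?R\<^sup>* \<and> (n, z) \<in> ?R\<^sup>*}"
  have "n \<in> ?Z" if n: "n \<in> ?Y" for n
  proof (cases "n = x")
    case False
    then obtain m where "(x, m) \<in> ?R\<^sup>*" "(m, n) \<in> ?R" using n by (auto elim: rtranclE)
    then have "n \<in> W" "(x, n) \<in> via E W" unfolding via_def by auto
    moreover have "(n, y) \<in> via E W" using n z(2) unfolding via_def by auto
    ultimately show ?thesis by blast
  qed simp
  then have "(x, z) \<in> (Restr E ?Z)\<^sup>*"
    using rtrancl_restrict_intermediate[OF z(1)] rtrancl_mono[of "Restr ?R ?Y" "Restr E ?Z"]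
    by blast
  moreover have "z \<in> ?Z" "y \<in> ?Z" using \<open>\<And>n. n \<in> ?Y \<Longrightarrow> n \<in> ?Z\<close> z(1) by auto
  ultimately show ?thesis using z(2) by (auto intro: rtrancl_into_rtrancl)
qed

lemma is_loop_strong_component:
  assumes "U \<subseteq> V" "u \<in> U"
  shows "is_loop V E {w. (w, u) \<in> (Restr E U)\<^sup>* \<and> (u, w) \<in> (Restr E U)\<^sup>*}"
    (is "is_loop V E ?C")
proof -
  let ?R = "Restr E U"
  have "w \<in> U" if "(w, u) \<in> ?R\<^sup>*" for w
    using that assms(2) by (cases rule: converse_rtranclE) auto
  then have "?C \<subseteq> U" by blast
  moreover have "(a, b) \<in> (Restr E ?C)\<^sup>*" if a: "a \<in> ?C" and b: "b \<in> ?C" for a b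
  proof -
    have "x \<in> ?C" if "(a, x) \<in> ?R\<^sup>*" "(x, b) \<in> ?R\<^sup>*" for x
      using a b that rtrancl_trans[of x b ?R u] rtrancl_trans[of u a ?R x] by simp
    then have "Restr ?R {x. (a, x) \<in> ?R\<^sup>* \<and> (x, b) \<in> ?R\<^sup>*} \<subseteq> Restr E ?C" by blast
    moreover have "(a, b) \<in> ?R\<^sup>*" using a b rtrancl_trans[of a u ?R b] by simp
    ultimately show ?thesis
      using rtrancl_restrict_intermediate[of a b ?R] rtrancl_mono[of _ "Restr E ?C"] by blast
  qed
  moreover have "u \<in> ?C" by simp
  ultimately show ?thesis unfolding is_loop_def using assms(1) by blast
qed

definition lifted_loop :: "('v \<times> 'v) set \<Rightarrow> 'v set \<Rightarrow> 'v set \<Rightarrow> 'v set" where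
  "lifted_loop E W S = S \<union> {w \<in> W. \<exists>s\<in>S. \<exists>s'\<in>S. (s, w) \<in> via E W \<and> (w, s') \<in> via E W}"

lemma is_loop_lifted_loop:
  assumes "W \<subseteq> V" and S: "is_loop (V - W) (margE V E W) S"
  shows "is_loop V E (lifted_loop E W S)"
proof -
  let ?L = "lifted_loop E W S"
  have SVW: "S \<subseteq> V - W" and "S \<noteq> {}"
    and conn: "\<And>a b. a \<in> S \<Longrightarrow> b \<in> S \<Longrightarrow> (a, b) \<in> (Restr (margE V E W) S)\<^sup>*"
    using S unfolding is_loop_def by auto
  have from_S: "\<exists>s\<in>S. y = s \<or> y \<in> W \<and> (s, y) \<in> via E W"
    and to_S: "\<exists>s\<in>S. y = s \<or> y \<in> W \<and> (y, s) \<in> via E W" if "y \<in> ?L" for y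
    using that unfolding lifted_loop_def by blast+
  have via_within: "(x, y) \<in> (Restr E ?L)\<^sup>*"
    if x: "x \<in> ?L" and y: "y \<in> ?L" and xy: "(x, y) \<in> via E W" for x y
  proof -
    have "n \<in> ?L" if n: "n \<in> W" "(x, n) \<in> via E W" "(n, y) \<in> via E W" for n
    proof -
      obtain s where "s \<in> S" "(s, n) \<in> via E W"
        using from_S[OF x] n(2) via_trans[of _ x E W n] by blast
      moreover obtain s' where "s' \<in> S" "(n, s') \<in> via E W"
        using to_S[OF y] n(3) via_trans[of n y E W] by blast
      ultimately show ?thesis using n(1) unfolding lifted_loop_def by blast
    qed
    then have "Restr E ({x, y} \<union> {n \<in> W. (x, n) \<in> via E W \<and> (n, y) \<in> via E W}) \<subseteq> Restr E ?L"
      using x y by blast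
    then show ?thesis using via_path_through_intermediates[OF xy] rtrancl_mono by blast
  qed
  have "S \<subseteq> ?L" unfolding lifted_loop_def by blast
  have "(a, b) \<in> (Restr E ?L)\<^sup>*" if a: "a \<in> ?L" and b: "b \<in> ?L" for a b
  proof -
    obtain sa where sa: "sa \<in> S" "(a, sa) \<in> (Restr E ?L)\<^sup>*"
      using to_S[OF a] via_within[OF a] \<open>S \<subseteq> ?L\<close> by blast
    obtain sb where sb: "sb \<in> S" "(sb, b) \<in> (Restr E ?L)\<^sup>*"
      using from_S[OF b] via_within[OF _ b] \<open>S \<subseteq> ?L\<close> by blast
    have "(sa, sb) \<in> (Restr (margE V E W) S)\<^sup>*" using conn sa(1) sb(1) .
    then have "(sa, sb) \<in> (Restr E ?L)\<^sup>*"
    proof (induction rule: rtrancl_induct)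
      case (step y z)
      then have "(y, z) \<in> (Restr E ?L)\<^sup>*"
        using via_within \<open>S \<subseteq> ?L\<close> unfolding margE_def by blast
      with step.IH show ?case by (rule rtrancl_trans)
    qed simp
    with sa(2) sb(2) show ?thesis by (meson rtrancl_trans)
  qed
  moreover have "?L \<subseteq> V" using SVW assms(1) unfolding lifted_loop_def by blast
  ultimately show ?thesis unfolding is_loop_def using \<open>S \<noteq> {}\<close> \<open>S \<subseteq> ?L\<close> by blast
qed

section \<open>Measurable solvability\<close>

definition determined :: "'w measure \<Rightarrow> ('v \<Rightarrow> 'x measure) \<Rightarrow> ('i \<Rightarrow> 'n measure) \<Rightarrow>
    ('v \<Rightarrow> 'w \<Rightarrow> 'x) \<Rightarrow> ('i \<Rightarrow> 'w \<Rightarrow> 'n) \<Rightarrow> 'v \<Rightarrow> 'v set \<Rightarrow> 'i set \<Rightarrow> bool" where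
  "determined \<Omega> M N X Ev v B K \<longleftrightarrow>
    (\<exists>h. h \<in> measurable (PiM B M \<Otimes>\<^sub>M PiM K N) (M v) \<and>
      (AE \<omega> in \<Omega>. X v \<omega> = h (restrict (\<lambda>u. X u \<omega>) B, restrict (\<lambda>i. Ev i \<omega>) K)))"

lemma determined_self: "v \<in> B \<Longrightarrow> determined \<Omega> M N X Ev v B K"
  unfolding determined_def
  by (rule exI[of _ "\<lambda>z. fst z v"])
     (simp add: measurable_compose[OF measurable_fst measurable_component_singleton])

lemma determined_mono:
  assumes "determined \<Omega> M N X Ev v B K" "B \<subseteq> B'" "K \<subseteq> K'"
  shows "determined \<Omega> M N X Ev v B' K'"
proof -
  obtain h where h: "h \<in> measurable (PiM B M \<Otimes>\<^sub>M PiM K N) (M v)"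
    "AE \<omega> in \<Omega>. X v \<omega> = h (restrict (\<lambda>u. X u \<omega>) B, restrict (\<lambda>i. Ev i \<omega>) K)"
    using assms(1) unfolding determined_def by blast
  have "(\<lambda>z. (restrict (fst z) B, restrict (snd z) K)) \<in>
      measurable (PiM B' M \<Otimes>\<^sub>M PiM K' N) (PiM B M \<Otimes>\<^sub>M PiM K N)"
    by (intro measurable_Pair measurable_compose[OF measurable_fst measurable_restrict_subset]
        measurable_compose[OF measurable_snd measurable_restrict_subset] assms(2,3))
  then have "(\<lambda>z. h (restrict (fst z) B, restrict (snd z) K)) \<in> measurable (PiM B' M \<Otimes>\<^sub>M PiM K' N) (M v)"
    using h(1) by (rule measurable_compose)
  moreover have "B' \<inter> B = B" "K' \<inter> K = K" using assms(2,3) by auto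
  ultimately show ?thesis unfolding determined_def using h(2)
    by (intro exI[of _ "\<lambda>z. h (restrict (fst z) B, restrict (snd z) K)"]) (simp add: restrict_restrict)
qed

lemma determined_subst:
  assumes "finite B" "determined \<Omega> M N X Ev v B K"
    and "\<And>u. u \<in> B \<Longrightarrow> determined \<Omega> M N X Ev u B' K"
  shows "determined \<Omega> M N X Ev v B' K"
proof -
  obtain h where h: "h \<in> measurable (PiM B M \<Otimes>\<^sub>M PiM K N) (M v)"
    "AE \<omega> in \<Omega>. X v \<omega> = h (restrict (\<lambda>u. X u \<omega>) B, restrict (\<lambda>i. Ev i \<omega>) K)"
    using assms(2) unfolding determined_def by blast
  have "\<forall>u\<in>B. \<exists>hu. hu \<in> measurable (PiM B' M \<Otimes>\<^sub>M PiM K N) (M u) \<and>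
      (AE \<omega> in \<Omega>. X u \<omega> = hu (restrict (\<lambda>u. X u \<omega>) B', restrict (\<lambda>i. Ev i \<omega>) K))"
    using assms(3) unfolding determined_def by blast
  then obtain hh where "\<forall>u\<in>B. hh u \<in> measurable (PiM B' M \<Otimes>\<^sub>M PiM K N) (M u) \<and>
      (AE \<omega> in \<Omega>. X u \<omega> = hh u (restrict (\<lambda>u. X u \<omega>) B', restrict (\<lambda>i. Ev i \<omega>) K))"
    by (elim bchoice[elim_format] exE)
  then have hh: "\<And>u. u \<in> B \<Longrightarrow> hh u \<in> measurable (PiM B' M \<Otimes>\<^sub>M PiM K N) (M u)"
    "\<And>u. u \<in> B \<Longrightarrow> AE \<omega> in \<Omega>. X u \<omega> = hh u (restrict (\<lambda>u. X u \<omega>) B', restrict (\<lambda>i. Ev i \<omega>) K)"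
    by auto
  have "(\<lambda>z. (\<lambda>u\<in>B. hh u z, snd z)) \<in> measurable (PiM B' M \<Otimes>\<^sub>M PiM K N) (PiM B M \<Otimes>\<^sub>M PiM K N)"
    by (intro measurable_Pair measurable_restrict hh(1) measurable_snd)
  then have "(\<lambda>z. h (\<lambda>u\<in>B. hh u z, snd z)) \<in> measurable (PiM B' M \<Otimes>\<^sub>M PiM K N) (M v)"
    using h(1) by (rule measurable_compose)
  moreover have "AE \<omega> in \<Omega>. \<forall>u\<in>B. X u \<omega> = hh u (restrict (\<lambda>u. X u \<omega>) B', restrict (\<lambda>i. Ev i \<omega>) K)"
    using hh(2) assms(1) by (intro AE_ball_countable') (auto intro: countable_finite)
  then have "AE \<omega> in \<Omega>. X v \<omega> =
      h (\<lambda>u\<in>B. hh u (restrict (\<lambda>u. X u \<omega>) B', restrict (\<lambda>i. Ev i \<omega>) K), restrict (\<lambda>i. Ev i \<omega>) K)"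
    using h(2)
  proof eventually_elim
    case (elim \<omega>)
    then have "restrict (\<lambda>u. X u \<omega>) B =
        (\<lambda>u\<in>B. hh u (restrict (\<lambda>u. X u \<omega>) B', restrict (\<lambda>i. Ev i \<omega>) K))"
      by (auto simp: fun_eq_iff)
    with elim(2) show ?case by simp
  qed
  ultimately show ?thesis unfolding determined_def
    by (intro exI[of _ "\<lambda>z. h (\<lambda>u\<in>B. hh u z, snd z)"]) simp
qed

lemma determined_regroup:
  assumes "determined \<Omega> M N X Ev v B K"
    and "\<And>i. i \<in> K \<Longrightarrow> \<phi> i \<in> K' \<and> i \<in> G (\<phi> i)"
  shows "determined \<Omega> M (\<lambda>j. PiM (G j) N) X (\<lambda>j \<omega>. restrict (\<lambda>i. Ev i \<omega>) (G j)) v B K'"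
proof -
  obtain h where h: "h \<in> measurable (PiM B M \<Otimes>\<^sub>M PiM K N) (M v)"
    "AE \<omega> in \<Omega>. X v \<omega> = h (restrict (\<lambda>u. X u \<omega>) B, restrict (\<lambda>i. Ev i \<omega>) K)"
    using assms(1) unfolding determined_def by blast
  let ?ungroup = "\<lambda>y. \<lambda>i\<in>K. y (\<phi> i) i"
  have "?ungroup \<in> measurable (PiM K' (\<lambda>j. PiM (G j) N)) (PiM K N)"
  proof (rule measurable_restrict)
    fix i assume i: "i \<in> K"
    have "(\<lambda>y. y (\<phi> i)) \<in> measurable (PiM K' (\<lambda>j. PiM (G j) N)) (PiM (G (\<phi> i)) N)"
      using assms(2)[OF i] by (intro measurable_component_singleton) blast
    moreover have "(\<lambda>z. z i) \<in> measurable (PiM (G (\<phi> i)) N) (N i)"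
      using assms(2)[OF i] by (intro measurable_component_singleton) blast
    ultimately show "(\<lambda>y. y (\<phi> i) i) \<in> measurable (PiM K' (\<lambda>j. PiM (G j) N)) (N i)"
      by (rule measurable_compose[where g = "\<lambda>z. z i"])
  qed
  then have "(\<lambda>z. h (fst z, ?ungroup (snd z))) \<in>
      measurable (PiM B M \<Otimes>\<^sub>M PiM K' (\<lambda>j. PiM (G j) N)) (M v)"
    by (intro measurable_compose[OF _ h(1)] measurable_Pair measurable_fst
        measurable_compose[OF measurable_snd])
  moreover have "?ungroup (\<lambda>j\<in>K'. restrict (\<lambda>i. Ev i \<omega>) (G j)) = restrict (\<lambda>i. Ev i \<omega>) K" for \<omega>
    using assms(2) by (simp add: fun_eq_iff)
  ultimately show ?thesis unfolding determined_def using h(2)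
    by (intro exI[of _ "\<lambda>z. h (fst z, ?ungroup (snd z))"]) simp
qed

lemma grouped_noise:
  assumes "prob_space \<Omega>" "finite I"
    and "\<forall>i\<in>I. standard_borel (N i) \<and> Ev i \<in> measurable \<Omega> (N i)"
    and "prob_space.indep_vars \<Omega> N Ev I"
    and "\<And>j. j \<in> J \<Longrightarrow> G j \<subseteq> I" "disjoint_family_on G J"
  shows "\<forall>j\<in>J. standard_borel (PiM (G j) N) \<and>
      (\<lambda>\<omega>. restrict (\<lambda>i. Ev i \<omega>) (G j)) \<in> measurable \<Omega> (PiM (G j) N)"
    and "prob_space.indep_vars \<Omega> (\<lambda>j. PiM (G j) N) (\<lambda>j \<omega>. restrict (\<lambda>i. Ev i \<omega>) (G j)) J"
proof -
  show "\<forall>j\<in>J. standard_borel (PiM (G j) N) \<and>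
      (\<lambda>\<omega>. restrict (\<lambda>i. Ev i \<omega>) (G j)) \<in> measurable \<Omega> (PiM (G j) N)"
  proof
    fix j assume "j \<in> J"
    with assms(5) have "G j \<subseteq> I" .
    with assms(2) have "finite (G j)" by (rule finite_subset[rotated])
    with \<open>G j \<subseteq> I\<close> assms(3) show "standard_borel (PiM (G j) N) \<and>
        (\<lambda>\<omega>. restrict (\<lambda>i. Ev i \<omega>) (G j)) \<in> measurable \<Omega> (PiM (G j) N)"
      by (auto intro!: standard_borel_PiM measurable_restrict)
  qed
  show "prob_space.indep_vars \<Omega> (\<lambda>j. PiM (G j) N) (\<lambda>j \<omega>. restrict (\<lambda>i. Ev i \<omega>) (G j)) J"
    using assms(5,6) by (rule prob_space.indep_vars_restrict[OF assms(1,4)])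
qed

definition solving_map :: "'w measure \<Rightarrow> ('v \<Rightarrow> 'x measure) \<Rightarrow> ('i \<Rightarrow> 'n measure) \<Rightarrow>
    ('v \<Rightarrow> 'w \<Rightarrow> 'x) \<Rightarrow> ('i \<Rightarrow> 'w \<Rightarrow> 'n) \<Rightarrow> 'v \<Rightarrow> 'v set \<Rightarrow> 'i set \<Rightarrow> ('v \<Rightarrow> 'x) \<times> ('i \<Rightarrow> 'n) \<Rightarrow> 'x"
  where "solving_map \<Omega> M N X Ev v B K = (SOME h. h \<in> measurable (PiM B M \<Otimes>\<^sub>M PiM K N) (M v) \<and>
      (AE \<omega> in \<Omega>. X v \<omega> = h (restrict (\<lambda>u. X u \<omega>) B, restrict (\<lambda>i. Ev i \<omega>) K)))"

lemma solving_map: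
  assumes "determined \<Omega> M N X Ev v B K"
  shows "solving_map \<Omega> M N X Ev v B K \<in> measurable (PiM B M \<Otimes>\<^sub>M PiM K N) (M v)"
    and "AE \<omega> in \<Omega>. X v \<omega> = solving_map \<Omega> M N X Ev v B K (restrict (\<lambda>u. X u \<omega>) B, restrict (\<lambda>i. Ev i \<omega>) K)"
  using someI_ex[OF assms[unfolded determined_def]] unfolding solving_map_def by blast+

lemma is_loop_singleton: "v \<in> V \<Longrightarrow> is_loop V E {v}"
  unfolding is_loop_def by auto

lemma lsSEP_iff_determined_loops:
  "lsSEP V E H M P TYPE('w) TYPE('n) \<longleftrightarrow>
    (\<exists>(\<Omega> :: 'w measure) (N :: 'v set \<Rightarrow> 'n measure) Ev X.
      prob_space \<Omega> \<and>
      (\<forall>F\<in>maxH H. standard_borel (N F) \<and> Ev F \<in> measurable \<Omega> (N F)) \<and>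
      prob_space.indep_vars \<Omega> N Ev (maxH H) \<and>
      (\<forall>v\<in>V. X v \<in> measurable \<Omega> (M v)) \<and>
      distr \<Omega> (PiM V M) (\<lambda>\<omega>. restrict (\<lambda>v. X v \<omega>) V) = P \<and>
      (\<forall>S. is_loop V E S \<longrightarrow>
        (\<forall>v\<in>S. determined \<Omega> M N X Ev v (Pa E S - S) {F \<in> maxH H. F \<inter> S \<noteq> {}})))"
  (is "_ \<longleftrightarrow> (\<exists>\<Omega> N Ev X. ?noise \<Omega> N Ev X \<and> ?loops \<Omega> N Ev X)")
proof
  assume "lsSEP V E H M P TYPE('w) TYPE('n)"
  then show "\<exists>\<Omega> N Ev X. ?noise \<Omega> N Ev X \<and> ?loops \<Omega> N Ev X"
    unfolding lsSEP_def determined_def by blast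
next
  assume "\<exists>\<Omega> N Ev X. ?noise \<Omega> N Ev X \<and> ?loops \<Omega> N Ev X"
  then obtain \<Omega> N Ev X where noise: "?noise \<Omega> N Ev X" and loops: "?loops \<Omega> N Ev X"
    by blast
  let ?g = "\<lambda>S v. solving_map \<Omega> M N X Ev v (Pa E S - S) {F \<in> maxH H. F \<inter> S \<noteq> {}}"
  let ?f = "\<lambda>v. solving_map \<Omega> M N X Ev v (Pa E {v}) {F \<in> maxH H. v \<in> F}"
  text \<open>The structural equation of v is the solution of the singleton loop {v}.\<close>
  have singleton: "determined \<Omega> M N X Ev v (Pa E {v}) {F \<in> maxH H. v \<in> F}" if "v \<in> V" for v
  proof (rule determined_mono)
    show "determined \<Omega> M N X Ev v (Pa E {v} - {v}) {F \<in> maxH H. F \<inter> {v} \<noteq> {}}"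
      using loops is_loop_singleton[OF that] by blast
  qed auto
  show "lsSEP V E H M P TYPE('w) TYPE('n)"
    unfolding lsSEP_def
  proof (intro exI[of _ \<Omega>] exI[of _ N] exI[of _ Ev] exI[of _ ?f] exI[of _ X] exI[of _ ?g]
      conjI ballI allI impI)
  qed (use noise loops singleton in \<open>auto intro: solving_map\<close>)
qed

section \<open>Marginalization\<close>

definition marg_hyperedge :: "'v set \<Rightarrow> ('v \<times> 'v) set \<Rightarrow> 'v set \<Rightarrow> 'v set \<Rightarrow> 'v set" where
  "marg_hyperedge V E W F = {s \<in> V - W. s \<in> F \<or> (\<exists>u\<in>F \<inter> W. (u, s) \<in> via E W)}"

lemma marg_hyperedge_in_margH:
  assumes "F \<in> H" "F \<subseteq> V"
  shows "marg_hyperedge V E W F \<in> margH V E H W"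
  unfolding margH_def
proof (intro CollectI conjI bexI[of _ F] ballI)
  show "marg_hyperedge V E W F \<subseteq> V - W" "F \<subseteq> marg_hyperedge V E W F \<union> W"
    using assms(2) unfolding marg_hyperedge_def by blast+
  show "s \<in> F - W \<or> (\<exists>u\<in>F. u \<in> W \<and> (u, s) \<in> via E W)" if "s \<in> marg_hyperedge V E W F" for s
    using that unfolding marg_hyperedge_def by blast
qed (rule assms(1))

lemma finite_margH: "finite V \<Longrightarrow> finite (margH V E H W)"
  by (rule finite_subset[of _ "Pow (V - W)"]) (auto simp: margH_def)

lemma ex_maxH_superset:
  assumes "finite H" "F \<in> H"
  shows "\<exists>F'\<in>maxH H. F \<subseteq> F'"
proof -
  obtain m where "m \<in> H" "F \<subseteq> m" "\<forall>b\<in>H. m \<subseteq> b \<longrightarrow> m = b"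
    using finite_has_maximal2[OF assms] by blast
  then show ?thesis unfolding maxH_def by auto
qed

lemma HEDG_finite_maxH:
  assumes "HEDG V E H"
  shows "finite (maxH H)"
proof -
  have "maxH H \<subseteq> Pow V" using assms unfolding HEDG_def maxH_def by auto
  then show ?thesis using assms unfolding HEDG_def by (meson finite_Pow_iff finite_subset)
qed

lemma distr_restrict_subset:
  assumes "distr \<Omega> (PiM V M) (\<lambda>\<omega>. restrict (\<lambda>v. X v \<omega>) V) = P"
    and "\<forall>v\<in>V. X v \<in> measurable \<Omega> (M v)" and "V' \<subseteq> V"
  shows "distr \<Omega> (PiM V' M) (\<lambda>\<omega>. restrict (\<lambda>v. X v \<omega>) V') = distr P (PiM V' M) (\<lambda>x. restrict x V')"
proof -
  have "(\<lambda>\<omega>. restrict (\<lambda>v. X v \<omega>) V) \<in> measurable \<Omega> (PiM V M)"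
    using assms(2) by (intro measurable_restrict) auto
  moreover have "(\<lambda>x. restrict x V') \<in> measurable (PiM V M) (PiM V' M)"
    using assms(3) by (rule measurable_restrict_subset)
  moreover have "V \<inter> V' = V'" using assms(3) by auto
  ultimately show ?thesis unfolding assms(1)[symmetric] by (simp add: distr_distr comp_def)
qed

lemma marginal_hyperedge_assignment:
  assumes "HEDG V E H"
  obtains \<phi> where "\<And>F. F \<in> maxH H \<Longrightarrow> \<phi> F \<in> maxH (margH V E H W) \<and> marg_hyperedge V E W F \<subseteq> \<phi> F"
proof -
  have "\<exists>F'. F' \<in> maxH (margH V E H W) \<and> marg_hyperedge V E W F \<subseteq> F'" if "F \<in> maxH H" for F
  proof -
    have "F \<in> H" "F \<subseteq> V" using that assms unfolding maxH_def HEDG_def by auto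
    then have "marg_hyperedge V E W F \<in> margH V E H W" by (rule marg_hyperedge_in_margH)
    moreover have "finite (margH V E H W)" using assms unfolding HEDG_def by (simp add: finite_margH)
    ultimately show ?thesis using ex_maxH_superset by blast
  qed
  then have "\<forall>F\<in>maxH H. \<exists>F'. F' \<in> maxH (margH V E H W) \<and> marg_hyperedge V E W F \<subseteq> F'"
    by blast
  from bchoice[OF this] show ?thesis using that by blast
qed

locale loop_solvable_HEDG =
  fixes V :: "'v set" and E :: "('v \<times> 'v) set" and H :: "'v set set"
    and M :: "'v \<Rightarrow> 'x measure" and \<Omega> :: "'w measure" and N :: "'v set \<Rightarrow> 'n measure"
    and Ev :: "'v set \<Rightarrow> 'w \<Rightarrow> 'n" and X :: "'v \<Rightarrow> 'w \<Rightarrow> 'x"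
  assumes HEDG: "HEDG V E H"
    and loop_determined: "\<And>S v. is_loop V E S \<Longrightarrow> v \<in> S \<Longrightarrow>
      determined \<Omega> M N X Ev v (Pa E S - S) {F \<in> maxH H. F \<inter> S \<noteq> {}}"
begin

lemma edges_in_V: "E \<subseteq> V \<times> V" and finite_V: "finite V"
  using HEDG unfolding HEDG_def by auto

lemma finite_Pa: "finite (Pa E S)"
  using edges_in_V finite_V by (auto simp: Pa_def intro: finite_subset[of _ V])

lemma determined_latent:
  assumes WV: "W \<subseteq> V" and "u \<in> W"
  shows "determined \<Omega> M N X Ev u {a \<in> V - W. (a, u) \<in> via E W}
    {F \<in> maxH H. \<exists>w\<in>F \<inter> W. (w, u) \<in> (Restr E W)\<^sup>*}"
  using \<open>u \<in> W\<close>
proof (induction "card {w \<in> W. (w, u) \<in> (Restr E W)\<^sup>*}" arbitrary: u rule: less_induct)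
  case less
  let ?R = "Restr E W"
  let ?A = "\<lambda>u. {w \<in> W. (w, u) \<in> ?R\<^sup>*}"
  let ?C = "{w. (w, u) \<in> ?R\<^sup>* \<and> (u, w) \<in> ?R\<^sup>*}"
  let ?B = "\<lambda>u. {a \<in> V - W. (a, u) \<in> via E W}"
  let ?K = "\<lambda>u. {F \<in> maxH H. \<exists>w\<in>F \<inter> W. (w, u) \<in> ?R\<^sup>*}"
  have "?C \<subseteq> W" using less.prems by (auto elim: rtranclE)
  have "determined \<Omega> M N X Ev u (Pa E ?C - ?C) {F \<in> maxH H. F \<inter> ?C \<noteq> {}}"
    using loop_determined[OF is_loop_strong_component[OF WV less.prems]] by simp
  then have "determined \<Omega> M N X Ev u (Pa E ?C - ?C) (?K u)"
    by (rule determined_mono) (use \<open>?C \<subseteq> W\<close> in blast)+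
  then show ?case
  proof (rule determined_subst[OF finite_Diff[OF finite_Pa]])
    fix p assume p: "p \<in> Pa E ?C - ?C"
    then obtain c where c: "c \<in> ?C" "(p, c) \<in> E" unfolding Pa_def by auto
    show "determined \<Omega> M N X Ev p (?B u) (?K u)"
    proof (cases "p \<in> W")
      case False
      then show ?thesis
        using c edges_in_V via_append_path[OF _ edge_in_via[OF c(2)]] by (intro determined_self) auto
    next
      case True
      have pu: "(p, u) \<in> ?R\<^sup>*"
        using c \<open>?C \<subseteq> W\<close> True by (auto intro: converse_rtrancl_into_rtrancl)
      have "u \<notin> ?A p" using p pu by auto
      moreover have "?A p \<subseteq> ?A u" using pu by (auto intro: rtrancl_trans)
      ultimately have "card (?A p) < card (?A u)"
        using less.prems finite_V WV by (intro psubset_card_mono) (auto intro: finite_subset)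
      from less.hyps[OF this True] show ?thesis
        by (rule determined_mono) (use pu via_append_path in \<open>auto intro: rtrancl_trans\<close>)
    qed
  qed
qed

lemma determined_marginal_loop:
  assumes WV: "W \<subseteq> V" and S: "is_loop (V - W) (margE V E W) S" and "v \<in> S"
  shows "determined \<Omega> M N X Ev v (Pa (margE V E W) S - S)
    {F \<in> maxH H. marg_hyperedge V E W F \<inter> S \<noteq> {}}" (is "determined _ _ _ _ _ _ ?B ?K")
proof -
  let ?L = "lifted_loop E W S"
  have SVW: "S \<subseteq> V - W" using S unfolding is_loop_def by blast
  have "S \<subseteq> ?L" unfolding lifted_loop_def by blast
  have "marg_hyperedge V E W F \<inter> S \<noteq> {}" if "x \<in> F" "x \<in> ?L" for F x
    using that SVW unfolding lifted_loop_def marg_hyperedge_def by blast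
  then have K: "{F \<in> maxH H. F \<inter> ?L \<noteq> {}} \<subseteq> ?K" by blast
  have "determined \<Omega> M N X Ev v (Pa E ?L - ?L) {F \<in> maxH H. F \<inter> ?L \<noteq> {}}"
    using loop_determined[OF is_loop_lifted_loop[OF WV S]] \<open>v \<in> S\<close> \<open>S \<subseteq> ?L\<close> by blast
  then have "determined \<Omega> M N X Ev v (Pa E ?L - ?L) ?K"
    by (rule determined_mono[OF _ order_refl K])
  then show ?thesis
  proof (rule determined_subst[OF finite_Diff[OF finite_Pa]])
    fix p assume p: "p \<in> Pa E ?L - ?L"
    then obtain x where x: "x \<in> ?L" "(p, x) \<in> E" unfolding Pa_def by auto
    obtain s where s: "s \<in> S" "(p, s) \<in> via E W"
    proof (cases "x \<in> S")
      case True
      then show ?thesis using that edge_in_via[OF x(2)] by blast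
    next
      case False
      then obtain s where "s \<in> S" "x \<in> W" "(x, s) \<in> via E W"
        using x(1) unfolding lifted_loop_def by blast
      then show ?thesis using that via_prepend_edge[OF x(2)] by blast
    qed
    have "p \<in> ?B" if "p \<in> V - W" "(p, s) \<in> via E W" "p \<notin> S" for p
    proof -
      have "(p, s) \<in> margE V E W" using that s(1) SVW unfolding margE_def by auto
      with that(3) s(1) show ?thesis unfolding Pa_def by blast
    qed
    note in_B = this
    show "determined \<Omega> M N X Ev p ?B ?K"
    proof (cases "p \<in> W")
      case False
      have "p \<in> V" using x(2) edges_in_V by auto
      then show ?thesis
        using in_B[OF _ s(2)] False p \<open>S \<subseteq> ?L\<close> by (intro determined_self) blast
    next
      case True
      have "a \<in> ?B" if a: "a \<in> V - W" "(a, p) \<in> via E W" for a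
      proof (rule in_B[OF a(1) via_trans[OF a(2) True s(2)]])
        text \<open>Otherwise p would lie on a W-path between two nodes of S.\<close>
        show "a \<notin> S"
          using p True a(2) s unfolding lifted_loop_def by blast
      qed
      moreover have "F \<in> ?K" if "F \<in> maxH H" "w \<in> F \<inter> W" "(w, p) \<in> (Restr E W)\<^sup>*" for F w
      proof -
        have "s \<in> marg_hyperedge V E W F"
          using that via_prepend_path[OF that(3) s(2)] s(1) SVW unfolding marg_hyperedge_def by blast
        with that(1) s(1) show ?thesis by blast
      qed
      ultimately show ?thesis
        by (blast intro: determined_mono[OF determined_latent[OF WV True]])
    qed
  qed
qed

end

theorem mainTheorem12:
  fixes V :: "'v set" and E :: "('v \<times> 'v) set" and H :: "'v set set"
    and M :: "'v \<Rightarrow> 'x measure" and P :: "('v \<Rightarrow> 'x) measure" and W :: "'v set"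
  assumes "HEDG V E H"
    and "\<forall>v\<in>V. standard_borel (M v)"
    and "prob_space P" and "sets P = sets (PiM V M)"
    and "lsSEP V E H M P TYPE('w) TYPE('n)"
    and "W \<subseteq> V"
  shows "lsSEP (V - W) (margE V E W) (margH V E H W) M
           (distr P (PiM (V - W) M) (\<lambda>x. restrict x (V - W)))
           TYPE('w) TYPE('v set \<Rightarrow> 'n)"
proof -
  obtain \<Omega> :: "'w measure" and N :: "'v set \<Rightarrow> 'n measure" and Ev X
    where \<Omega>: "prob_space \<Omega>"
      and noise: "\<forall>F\<in>maxH H. standard_borel (N F) \<and> Ev F \<in> measurable \<Omega> (N F)"
      and indep: "prob_space.indep_vars \<Omega> N Ev (maxH H)"
      and X: "\<forall>v\<in>V. X v \<in> measurable \<Omega> (M v)"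
      and law: "distr \<Omega> (PiM V M) (\<lambda>\<omega>. restrict (\<lambda>v. X v \<omega>) V) = P"
      and loops: "\<forall>S. is_loop V E S \<longrightarrow>
        (\<forall>v\<in>S. determined \<Omega> M N X Ev v (Pa E S - S) {F \<in> maxH H. F \<inter> S \<noteq> {}})"
    using assms(5) unfolding lsSEP_iff_determined_loops by blast
  interpret loop_solvable_HEDG V E H M \<Omega> N Ev X
    using assms(1) loops by unfold_locales blast+
  obtain \<phi> where \<phi>: "\<And>F. F \<in> maxH H \<Longrightarrow>
      \<phi> F \<in> maxH (margH V E H W) \<and> marg_hyperedge V E W F \<subseteq> \<phi> F"
    using marginal_hyperedge_assignment[OF assms(1)] by blast
  text \<open>The new noise of a maximal marginal hyperedge F' is the tuple of the old noises of
    the hyperedges F with \<phi> F = F'.\<close>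
  define G where "G F' = {F \<in> maxH H. \<phi> F = F'}" for F'
  have "\<And>F'. F' \<in> maxH (margH V E H W) \<Longrightarrow> G F' \<subseteq> maxH H"
    and "disjoint_family_on G (maxH (margH V E H W))"
    unfolding G_def disjoint_family_on_def by auto
  note grouped = grouped_noise[OF \<Omega> HEDG_finite_maxH[OF assms(1)] noise indep this]
  have "determined \<Omega> M (\<lambda>F'. PiM (G F') N) X (\<lambda>F' \<omega>. restrict (\<lambda>F. Ev F \<omega>) (G F')) v
      (Pa (margE V E W) S - S) {F' \<in> maxH (margH V E H W). F' \<inter> S \<noteq> {}}"
    if "is_loop (V - W) (margE V E W) S" "v \<in> S" for S v
    using \<phi> by (intro determined_regroup[OF determined_marginal_loop[OF assms(6) that]])
      (auto simp: G_def)
  then show ?thesis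
    unfolding lsSEP_iff_determined_loops
    by (intro exI[of _ \<Omega>] exI[of _ "\<lambda>F'. PiM (G F') N"] exI[of _ X]
        exI[of _ "\<lambda>F' \<omega>. restrict (\<lambda>F. Ev F \<omega>) (G F')"] \<Omega> grouped
        distr_restrict_subset[OF law X Diff_subset] conjI allI impI ballI)
      (use X in auto)
qed

end
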